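(* Suppose $\kappa<\lambda$ are infinite regular cardinals and $d:[\lambda]^2\to\kappa$ is subadditive and unbounded. Then there is a strong $\lambda$-system $S=\langle\lambda\times 1,\mathcal{R}\rangle$ such that $|\mathcal{R}|=\kappa$ and $S$ has no cofinal branch.
   Context: $d:[\lambda]^2\to\kappa$ (written $d(\alpha,\beta)$ for $\alpha<\beta$) is subadditive if for all $\alpha<\beta<\gamma<\lambda$: $d(\alpha,\gamma)\le\max\{d(\alpha,\beta),d(\beta,\gamma)\}$ and $d(\alpha,\beta)\le\max\{d(\alpha,\gamma),d(\beta,\gamma)\}$; it is unbounded if for every unbounded $I\subseteq\lambda$, $d``[I]^2$ is unbounded in $\kappa$. A relation $R$ is tree-like if $a<_R c$ and $b<_R c$ imply $a,b$ are $R$-comparable ($a=b$, $a<_Rb$ or $b<_Ra$). A $\lambda$-system $\langle I\times\nu,\mathcal{R}\rangle$ consists of an unbounded $I\subseteq\lambda$, $0<\nu<\lambda$, levels $S_\alpha=\{\alpha\}\times\nu$ (with $S$ their union), and a set $\mathcal{R}$ of binary transitive tree-like relations on $S$ with $|\mathcal{R}|<\lambda$, such that $(\alpha_0,\beta_0)<_R(\alpha_1,\beta_1)$ implies $\alpha_0<\alpha_1$, and for all $\alpha_0<\alpha_1$ in $I$ some elements of the two levels are related by some $R\in\mathcal{R}$. It is strong if for all $\alpha_0<\alpha_1$ in $I$ and every $\beta_1<\nu$ there are $\beta_0<\nu$, $R\in\mathcal{R}$ with $(\alpha_0,\beta_0)<_R(\alpha_1,\beta_1)$. A branch through $R$ is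 a set of pairwise $R$-comparable elements; it is cofinal if it meets unboundedly many levels. *)

theory Defs
  imports Main
begin

(* Cardinals are represented as cardinal-order well-orders (library: Card_order,
   Cinfinite, regularCard). The ordinals below a cardinal L are the elements of
   Field L, ordered by L (non-strictly); the strict order is "lt". *)

definition lt :: "'a rel \<Rightarrow> 'a \<Rightarrow> 'a \<Rightarrow> bool" where
  "lt r a b \<longleftrightarrow> (a, b) \<in> r \<and> a \<noteq> b"

definition unbounded_in :: "'a set \<Rightarrow> 'a rel \<Rightarrow> bool" where
  "unbounded_in I r \<longleftrightarrow> I \<subseteq> Field r \<and> (\<forall>a\<in>Field r. \<exists>b\<in>I. (a, b) \<in> r)"

(* d : [lambda]^2 \<rightarrow> kappa, written d a b for a < b *)
definition colouring :: "'l rel \<Rightarrow> 'k rel \<Rightarrow> ('l \<Rightarrow> 'l \<Rightarrow> 'k) \<Rightarrow> bool" where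
  "colouring L K d \<longleftrightarrow> (\<forall>a\<in>Field L. \<forall>b\<in>Field L. lt L a b \<longrightarrow> d a b \<in> Field K)"

definition le_max :: "'k rel \<Rightarrow> 'k \<Rightarrow> 'k \<Rightarrow> 'k \<Rightarrow> bool" where
  "le_max K x y z \<longleftrightarrow> (x, y) \<in> K \<or> (x, z) \<in> K"

definition subadditive :: "'l rel \<Rightarrow> 'k rel \<Rightarrow> ('l \<Rightarrow> 'l \<Rightarrow> 'k) \<Rightarrow> bool" where
  "subadditive L K d \<longleftrightarrow>
     (\<forall>a\<in>Field L. \<forall>b\<in>Field L. \<forall>c\<in>Field L. lt L a b \<and> lt L b c \<longrightarrow>
        le_max K (d a c) (d a b) (d b c) \<and> le_max K (d a b) (d a c) (d b c))"

definition unbounded_col :: "'l rel \<Rightarrow> 'k rel \<Rightarrow> ('l \<Rightarrow> 'l \<Rightarrow> 'k) \<Rightarrow> bool" where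
  "unbounded_col L K d \<longleftrightarrow>
     (\<forall>I. unbounded_in I L \<longrightarrow>
        unbounded_in {d a b | a b. a \<in> I \<and> b \<in> I \<and> lt L a b} K)"

definition ord_one :: "'a rel \<Rightarrow> 'a" where
  "ord_one L = wo_rel.suc L {wo_rel.minim L (Field L)}"

definition below :: "'a rel \<Rightarrow> 'a \<Rightarrow> 'a set" where
  "below L nu = {b \<in> Field L. lt L b nu}"

definition tree_like :: "'a rel \<Rightarrow> bool" where
  "tree_like R \<longleftrightarrow> (\<forall>a b c. (a, c) \<in> R \<and> (b, c) \<in> R \<longrightarrow> a = b \<or> (a, b) \<in> R \<or> (b, a) \<in> R)"

(* the lambda-system <I \<times> nu, \<R>>; nodes are pairs (alpha, beta) with alpha \<in> I, beta < nu *)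
definition lambda_system :: "'l rel \<Rightarrow> 'l set \<Rightarrow> 'l \<Rightarrow> ('l \<times> 'l) rel set \<Rightarrow> bool" where
  "lambda_system L I nu \<R> \<longleftrightarrow>
     unbounded_in I L \<and> nu \<in> Field L \<and> lt L (wo_rel.minim L (Field L)) nu \<and>
     ordLess2 (card_of \<R>) L \<and>
     (\<forall>R\<in>\<R>. R \<subseteq> (I \<times> below L nu) \<times> (I \<times> below L nu) \<and> trans R \<and> tree_like R \<and>
        (\<forall>a0 b0 a1 b1. ((a0, b0), (a1, b1)) \<in> R \<longrightarrow> lt L a0 a1)) \<and>
     (\<forall>a0\<in>I. \<forall>a1\<in>I. lt L a0 a1 \<longrightarrow>
        (\<exists>b0\<in>below L nu. \<exists>b1\<in>below L nu. \<exists>R\<in>\<R>. ((a0, b0), (a1, b1)) \<in> R))"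

definition strong_lambda_system :: "'l rel \<Rightarrow> 'l set \<Rightarrow> 'l \<Rightarrow> ('l \<times> 'l) rel set \<Rightarrow> bool" where
  "strong_lambda_system L I nu \<R> \<longleftrightarrow> lambda_system L I nu \<R> \<and>
     (\<forall>a0\<in>I. \<forall>a1\<in>I. lt L a0 a1 \<longrightarrow>
        (\<forall>b1\<in>below L nu. \<exists>b0\<in>below L nu. \<exists>R\<in>\<R>. ((a0, b0), (a1, b1)) \<in> R))"

definition branch :: "('l \<times> 'l) rel \<Rightarrow> ('l \<times> 'l) set \<Rightarrow> bool" where
  "branch R B \<longleftrightarrow> (\<forall>x\<in>B. \<forall>y\<in>B. x = y \<or> (x, y) \<in> R \<or> (y, x) \<in> R)"

definition cofinal_branch :: "'l rel \<Rightarrow> ('l \<times> 'l) rel \<Rightarrow> ('l \<times> 'l) set \<Rightarrow> bool" where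
  "cofinal_branch L R B \<longleftrightarrow> branch R B \<and> unbounded_in (fst ` B) L"

definition has_cofinal_branch :: "'l rel \<Rightarrow> ('l \<times> 'l) rel set \<Rightarrow> bool" where
  "has_cofinal_branch L \<R> \<longleftrightarrow> (\<exists>R\<in>\<R>. \<exists>B. cofinal_branch L R B)"

end

theory Submission
  imports Defs
begin

text \<open>Take the single level \<open>\<lambda> \<times> 1\<close> and, for every colour \<open>v\<close> attained by \<open>d\<close>, the relation
  \<open>R\<^sub>v\<close> relating \<open>\<alpha> < \<beta>\<close> iff \<open>d(\<alpha>, \<beta>) \<le> v\<close>. The first subadditivity inequality makes \<open>R\<^sub>v\<close>
  transitive, the second makes it tree-like, and \<open>\<alpha> < \<beta>\<close> are related by \<open>R\<^bsub>d(\<alpha>, \<beta>)\<^esub>\<close>, so the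
  system is strong. A cofinal branch through \<open>R\<^sub>v\<close> would be an unbounded set on which \<open>d\<close> is
  bounded by \<open>v\<close>. Finally \<open>v \<mapsto> R\<^sub>v\<close> is injective and the attained colours are unbounded in the
  regular cardinal \<open>\<kappa>\<close>, so there are exactly \<open>\<kappa>\<close> relations.\<close>

lemma lt_trans: "trans r \<Longrightarrow> antisym r \<Longrightarrow> lt r a b \<Longrightarrow> lt r b c \<Longrightarrow> lt r a c"
  unfolding lt_def trans_def antisym_def by blast

lemma lt_le_trans: "trans r \<Longrightarrow> antisym r \<Longrightarrow> lt r a b \<Longrightarrow> (b, c) \<in> r \<Longrightarrow> lt r a c"
  unfolding lt_def trans_def antisym_def by blast

lemma lt_not_sym: "antisym r \<Longrightarrow> lt r a b \<Longrightarrow> (b, a) \<notin> r"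
  unfolding lt_def antisym_def by blast

lemma lt_total:
  "total_on (Field r) r \<Longrightarrow> a \<in> Field r \<Longrightarrow> b \<in> Field r \<Longrightarrow> a \<noteq> b \<Longrightarrow> lt r a b \<or> lt r b a"
  unfolding lt_def total_on_def by blast

lemma unbounded_in_Field: "Refl r \<Longrightarrow> unbounded_in (Field r) r"
  unfolding unbounded_in_def refl_on_def by blast

lemma Cinfinite_wo_rel: "Cinfinite r \<Longrightarrow> wo_rel r"
  using Card_order_wo_rel by blast

lemma unbounded_in_not_bounded:
  assumes "Cinfinite r" and "unbounded_in X r" and "v \<in> Field r"
  shows "\<exists>x\<in>X. (x, v) \<notin> r"
proof -
  obtain z where "z \<in> Field r" "lt r v z"
    using Cinfinite_limit[OF assms(3,1)] unfolding lt_def by blast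
  moreover obtain x where "x \<in> X" "(z, x) \<in> r"
    using assms(2) \<open>z \<in> Field r\<close> unfolding unbounded_in_def by blast
  moreover have "trans r" "antisym r"
    using wo_rel.TRANS wo_rel.ANTISYM Cinfinite_wo_rel[OF assms(1)] by blast+
  ultimately show ?thesis using lt_le_trans lt_not_sym by metis
qed

text \<open>An unbounded subset of an order without a largest element is cofinal in the strict sense
  used by \<open>regularCard\<close>.\<close>

lemma cofinal_if_unbounded_in:
  assumes "Cinfinite r" and "unbounded_in X r"
  shows "cofinal X r"
  unfolding cofinal_def
proof
  fix a assume "a \<in> Field r"
  obtain x where x: "x \<in> X" "(x, a) \<notin> r"
    using unbounded_in_not_bounded[OF assms \<open>a \<in> Field r\<close>] by blast
  have "x \<in> Field r" using x assms(2) unfolding unbounded_in_def by blast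
  moreover have "x \<noteq> a"
    using x \<open>a \<in> Field r\<close> wo_rel.REFL[OF Cinfinite_wo_rel[OF assms(1)]] refl_onD by fastforce
  ultimately have "(a, x) \<in> r"
    using x \<open>a \<in> Field r\<close> wo_rel.TOTALS[OF Cinfinite_wo_rel[OF assms(1)]] by blast
  then show "\<exists>b\<in>X. a \<noteq> b \<and> (a, b) \<in> r" using x \<open>x \<noteq> a\<close> by (intro bexI[of _ x]) auto
qed

lemma regularCard_card_of_unbounded_in:
  assumes "Cinfinite r" and "regularCard r" and "unbounded_in X r"
  shows "ordIso2 (card_of X) r"
  using assms cofinal_if_unbounded_in unfolding regularCard_def unbounded_in_def by blast

context
  fixes L :: "'a rel"
  assumes wo: "Well_order L" and inf: "infinite (Field L)"
begin

private lemma wo_rel_L: "wo_rel L"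
  using wo unfolding wo_rel_def .

private lemma minim_in_Field: "wo_rel.minim L (Field L) \<in> Field L"
  using wo_rel.minim_inField[OF wo_rel_L] infinite_imp_nonempty[OF inf] by blast

private lemma AboveS_minim_nonempty: "AboveS L {wo_rel.minim L (Field L)} \<noteq> {}"
proof -
  let ?m = "wo_rel.minim L (Field L)"
  have "infinite (Field L - {?m})" using inf by simp
  then obtain y where "y \<in> Field L" "y \<noteq> ?m"
    using infinite_imp_nonempty by blast
  then show ?thesis
    using wo_rel_L by (auto simp: AboveS_def wo_rel.minim_least)
qed

lemma ord_one_in_Field: "ord_one L \<in> Field L"
  unfolding ord_one_def
  by (rule wo_rel.suc_inField[OF wo_rel_L _ AboveS_minim_nonempty]) (simp add: minim_in_Field)

lemma minim_lt_ord_one: "lt L (wo_rel.minim L (Field L)) (ord_one L)"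
proof -
  let ?m = "wo_rel.minim L (Field L)"
  have "wo_rel.suc L {?m} \<noteq> ?m \<and> (?m, wo_rel.suc L {?m}) \<in> L"
    by (rule wo_rel.suc_greater[OF wo_rel_L _ AboveS_minim_nonempty]) (simp_all add: minim_in_Field)
  then show ?thesis unfolding ord_one_def lt_def by auto
qed

lemma below_ord_one: "below L (ord_one L) = {wo_rel.minim L (Field L)}"
proof -
  let ?m = "wo_rel.minim L (Field L)"
  have "b = ?m" if "b \<in> Field L" and "lt L b (ord_one L)" for b
  proof (rule ccontr)
    assume "b \<noteq> ?m"
    then have "b \<in> AboveS L {?m}"
      using \<open>b \<in> Field L\<close> wo_rel_L by (auto simp: AboveS_def wo_rel.minim_least)
    then have "(ord_one L, b) \<in> L"
      using wo_rel.suc_least_AboveS[OF wo_rel_L] unfolding ord_one_def by blast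
    moreover have "antisym L" using wo_rel.ANTISYM[OF wo_rel_L] .
    ultimately show False using lt_not_sym \<open>lt L b (ord_one L)\<close> by metis
  qed
  moreover have "?m \<in> below L (ord_one L)"
    using minim_in_Field minim_lt_ord_one unfolding below_def by simp
  ultimately show ?thesis
    unfolding below_def by blast
qed

end

subsection \<open>Relations bounding the colouring\<close>

definition colours :: "'l rel \<Rightarrow> ('l \<Rightarrow> 'l \<Rightarrow> 'k) \<Rightarrow> 'l set \<Rightarrow> 'k set" where
  "colours L d I = {d a b | a b. a \<in> I \<and> b \<in> I \<and> lt L a b}"

lemma unbounded_colD: "unbounded_col L K d \<Longrightarrow> unbounded_in I L \<Longrightarrow> unbounded_in (colours L d I) K"
  unfolding unbounded_col_def colours_def by blast

definition colour_bounded_rel ::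
    "'l rel \<Rightarrow> 'k rel \<Rightarrow> ('l \<Rightarrow> 'l \<Rightarrow> 'k) \<Rightarrow> 'l \<Rightarrow> 'k \<Rightarrow> ('l \<times> 'l) rel" where
  "colour_bounded_rel L K d m v =
     {((a, m), (b, m)) | a b. a \<in> Field L \<and> b \<in> Field L \<and> lt L a b \<and> (d a b, v) \<in> K}"

lemma mem_colour_bounded_rel [simp]:
  "((x, y) \<in> colour_bounded_rel L K d m v) \<longleftrightarrow>
     snd x = m \<and> snd y = m \<and> fst x \<in> Field L \<and> fst y \<in> Field L \<and> lt L (fst x) (fst y) \<and>
     (d (fst x) (fst y), v) \<in> K"
  unfolding colour_bounded_rel_def by (cases x, cases y) auto

lemma subadditive_bound_trans:
  assumes "subadditive L K d" "trans K" "a \<in> Field L" "b \<in> Field L" "c \<in> Field L"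
    "lt L a b" "lt L b c" "(d a b, v) \<in> K" "(d b c, v) \<in> K"
  shows "(d a c, v) \<in> K"
  using assms unfolding subadditive_def le_max_def trans_def by blast

lemma subadditive_bound_tree:
  assumes "subadditive L K d" "trans K" "a \<in> Field L" "b \<in> Field L" "c \<in> Field L"
    "lt L a b" "lt L b c" "(d a c, v) \<in> K" "(d b c, v) \<in> K"
  shows "(d a b, v) \<in> K"
  using assms unfolding subadditive_def le_max_def trans_def by blast

lemma trans_colour_bounded_rel:
  assumes "trans L" "antisym L" "trans K" "subadditive L K d"
  shows "trans (colour_bounded_rel L K d m v)"
proof (rule transI)
  fix x y z
  assume "(x, y) \<in> colour_bounded_rel L K d m v" "(y, z) \<in> colour_bounded_rel L K d m v"
  then show "(x, z) \<in> colour_bounded_rel L K d m v"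
    using subadditive_bound_trans[OF assms(4,3), of "fst x" "fst y" "fst z" v]
      lt_trans[OF assms(1,2), of "fst x" "fst y" "fst z"]
    by simp
qed

lemma tree_like_colour_bounded_rel:
  assumes "total_on (Field L) L" "trans K" "subadditive L K d"
  shows "tree_like (colour_bounded_rel L K d m v)"
  unfolding tree_like_def
proof (intro allI impI)
  let ?R = "colour_bounded_rel L K d m v"
  fix x y z assume "(x, z) \<in> ?R \<and> (y, z) \<in> ?R"
  then have "x = y \<or> lt L (fst x) (fst y) \<or> lt L (fst y) (fst x)"
    using lt_total[OF assms(1), of "fst x" "fst y"] by (cases x, cases y) auto
  then show "x = y \<or> (x, y) \<in> ?R \<or> (y, x) \<in> ?R"
    using \<open>(x, z) \<in> ?R \<and> (y, z) \<in> ?R\<close>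
      subadditive_bound_tree[OF assms(3,2), of "fst x" "fst y" "fst z" v]
      subadditive_bound_tree[OF assms(3,2), of "fst y" "fst x" "fst z" v]
    by auto
qed

lemma mem_colour_bounded_rel_own_colour:
  assumes "colouring L K d" "Refl K" "a \<in> Field L" "b \<in> Field L" "lt L a b"
  shows "((a, m), (b, m)) \<in> colour_bounded_rel L K d m (d a b)"
  using assms refl_onD unfolding colouring_def by fastforce

lemma inj_on_colour_bounded_rel:
  assumes "colouring L K d" "Refl K" "antisym K"
  shows "inj_on (colour_bounded_rel L K d m) (colours L d (Field L))"
proof (rule inj_onI)
  have le: "(v, w) \<in> K"
    if v: "v \<in> colours L d (Field L)"
      and eq: "colour_bounded_rel L K d m v = colour_bounded_rel L K d m w" for v w
  proof -
    obtain a b where "a \<in> Field L" "b \<in> Field L" "lt L a b" "v = d a b"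
      using v unfolding colours_def by blast
    then have "((a, m), (b, m)) \<in> colour_bounded_rel L K d m w"
      using mem_colour_bounded_rel_own_colour[OF assms(1,2)] eq by metis
    then show ?thesis using \<open>v = d a b\<close> by simp
  qed
  fix v w assume "v \<in> colours L d (Field L)" "w \<in> colours L d (Field L)"
    and "colour_bounded_rel L K d m v = colour_bounded_rel L K d m w"
  then show "v = w" using le antisymD[OF assms(3)] by metis
qed

lemma colours_of_branch_bounded:
  assumes "antisym L" "branch (colour_bounded_rel L K d m v) B" "e \<in> colours L d (fst ` B)"
  shows "(e, v) \<in> K"
proof -
  obtain x y where "x \<in> B" "y \<in> B" "lt L (fst x) (fst y)" "e = d (fst x) (fst y)"
    using assms(3) unfolding colours_def by blast
  moreover from this have "(y, x) \<notin> colour_bounded_rel L K d m v"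
    using lt_not_sym[OF assms(1), of "fst x" "fst y"] by (auto simp: lt_def)
  ultimately show ?thesis
    using assms(2) unfolding branch_def lt_def by auto
qed

definition colour_bounded_rels :: "'l rel \<Rightarrow> 'k rel \<Rightarrow> ('l \<Rightarrow> 'l \<Rightarrow> 'k) \<Rightarrow> ('l \<times> 'l) rel set" where
  "colour_bounded_rels L K d =
     colour_bounded_rel L K d (wo_rel.minim L (Field L)) ` colours L d (Field L)"

subsection \<open>The strong system without cofinal branches\<close>

lemma strong_lambda_systemI:
  assumes "wo_rel L" "unbounded_in I L" "nu \<in> Field L" "lt L (wo_rel.minim L (Field L)) nu"
    and "ordLess2 (card_of \<R>) L"
    and rel: "\<And>R. R \<in> \<R> \<Longrightarrow> R \<subseteq> (I \<times> below L nu) \<times> (I \<times> below L nu) \<and> trans R \<and> tree_like R \<and>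
      (\<forall>a0 b0 a1 b1. ((a0, b0), (a1, b1)) \<in> R \<longrightarrow> lt L a0 a1)"
    and strong: "\<And>a0 a1 b1. a0 \<in> I \<Longrightarrow> a1 \<in> I \<Longrightarrow> lt L a0 a1 \<Longrightarrow> b1 \<in> below L nu \<Longrightarrow>
      \<exists>b0\<in>below L nu. \<exists>R\<in>\<R>. ((a0, b0), (a1, b1)) \<in> R"
  shows "strong_lambda_system L I nu \<R>"
proof -
  have "wo_rel.minim L (Field L) \<in> below L nu"
    using assms(3,4) wo_rel.minim_inField[OF assms(1)] unfolding below_def by blast
  then have "\<exists>b0\<in>below L nu. \<exists>b1\<in>below L nu. \<exists>R\<in>\<R>. ((a0, b0), (a1, b1)) \<in> R"
    if "a0 \<in> I" "a1 \<in> I" "lt L a0 a1" for a0 a1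
    using strong[OF that] by blast
  then show ?thesis
    unfolding strong_lambda_system_def lambda_system_def
    using assms(2-5) rel strong by simp
qed

lemma card_of_colour_bounded_rels:
  assumes "Cinfinite L" "Cinfinite K" "regularCard K" "colouring L K d" "unbounded_col L K d"
  shows "ordIso2 (card_of (colour_bounded_rels L K d)) K"
proof -
  let ?V = "colours L d (Field L)"
  have woK: "wo_rel K" using Cinfinite_wo_rel[OF assms(2)] .
  have "unbounded_in ?V K"
    using unbounded_colD[OF assms(5) unbounded_in_Field[OF wo_rel.REFL[OF Cinfinite_wo_rel[OF assms(1)]]]]
    .
  then have "ordIso2 (card_of ?V) K"
    by (rule regularCard_card_of_unbounded_in[OF assms(2,3)])
  moreover have "inj_on (colour_bounded_rel L K d (wo_rel.minim L (Field L))) ?V"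
    using inj_on_colour_bounded_rel[OF assms(4) wo_rel.REFL[OF woK] wo_rel.ANTISYM[OF woK]] .
  then have "ordIso2 (card_of (colour_bounded_rels L K d)) (card_of ?V)"
    unfolding colour_bounded_rels_def by (metis bij_betw_imageI card_of_ordIso ordIso_symmetric)
  ultimately show ?thesis using ordIso_transitive by blast
qed

lemma strong_lambda_system_colour_bounded_rels:
  assumes "Cinfinite L" "Cinfinite K" "colouring L K d" "subadditive L K d"
    and "ordLess2 (card_of (colour_bounded_rels L K d)) L"
  shows "strong_lambda_system L (Field L) (ord_one L) (colour_bounded_rels L K d)"
proof -
  let ?m = "wo_rel.minim L (Field L)" and ?S = "Field L \<times> below L (ord_one L)"
  have woL: "wo_rel L" and woK: "wo_rel K"
    using Cinfinite_wo_rel[OF assms(1)] Cinfinite_wo_rel[OF assms(2)] .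
  have wo: "Well_order L" and inf: "infinite (Field L)"
    using woL assms(1) unfolding wo_rel_def cinfinite_def by blast+
  have below: "below L (ord_one L) = {?m}" using below_ord_one[OF wo inf] .
  have rel: "R \<subseteq> ?S \<times> ?S \<and> trans R \<and> tree_like R \<and>
      (\<forall>a0 b0 a1 b1. ((a0, b0), (a1, b1)) \<in> R \<longrightarrow> lt L a0 a1)"
    if R: "R \<in> colour_bounded_rels L K d" for R
  proof -
    obtain v where "R = colour_bounded_rel L K d ?m v"
      using R unfolding colour_bounded_rels_def by blast
    moreover have "trans (colour_bounded_rel L K d ?m v)"
      by (rule trans_colour_bounded_rel[OF wo_rel.TRANS[OF woL] wo_rel.ANTISYM[OF woL]
            wo_rel.TRANS[OF woK] assms(4)])
    moreover have "tree_like (colour_bounded_rel L K d ?m v)"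
      by (rule tree_like_colour_bounded_rel[OF wo_rel.TOTAL[OF woL] wo_rel.TRANS[OF woK] assms(4)])
    moreover have "colour_bounded_rel L K d ?m v \<subseteq> ?S \<times> ?S"
      using below unfolding colour_bounded_rel_def by blast
    ultimately show ?thesis by simp
  qed
  have strong: "\<exists>b0\<in>below L (ord_one L). \<exists>R\<in>colour_bounded_rels L K d. ((a0, b0), (a1, b1)) \<in> R"
    if "a0 \<in> Field L" "a1 \<in> Field L" "lt L a0 a1" "b1 \<in> below L (ord_one L)" for a0 a1 b1
  proof -
    have "((a0, ?m), (a1, ?m)) \<in> colour_bounded_rel L K d ?m (d a0 a1)"
      using mem_colour_bounded_rel_own_colour[OF assms(3) wo_rel.REFL[OF woK] that(1-3)] .
    moreover have "colour_bounded_rel L K d ?m (d a0 a1) \<in> colour_bounded_rels L K d"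
      using that(1-3) unfolding colour_bounded_rels_def colours_def by blast
    moreover have "b1 = ?m" and "?m \<in> below L (ord_one L)" using below that(4) by simp_all
    ultimately show ?thesis by blast
  qed
  show ?thesis
    using strong_lambda_systemI[OF woL unbounded_in_Field[OF wo_rel.REFL[OF woL]]
        ord_one_in_Field[OF wo inf] minim_lt_ord_one[OF wo inf] assms(5)] rel strong
    by blast
qed

lemma not_has_cofinal_branch_colour_bounded_rels:
  assumes "Cinfinite K" "colouring L K d" "unbounded_col L K d" "antisym L"
  shows "\<not> has_cofinal_branch L (colour_bounded_rels L K d)"
proof
  assume "has_cofinal_branch L (colour_bounded_rels L K d)"
  then obtain v B where v: "v \<in> colours L d (Field L)"
    and B: "branch (colour_bounded_rel L K d (wo_rel.minim L (Field L)) v) B"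
    and unbounded: "unbounded_in (fst ` B) L"
    unfolding has_cofinal_branch_def cofinal_branch_def colour_bounded_rels_def by blast
  have "v \<in> Field K" using v assms(2) unfolding colours_def colouring_def by blast
  moreover have "unbounded_in (colours L d (fst ` B)) K"
    using unbounded_colD[OF assms(3) unbounded] .
  ultimately obtain e where "e \<in> colours L d (fst ` B)" "(e, v) \<notin> K"
    using unbounded_in_not_bounded[OF assms(1)] by blast
  then show False using colours_of_branch_bounded[OF assms(4) B] by blast
qed

theorem mainTheorem8:
  fixes L :: "'l rel" and K :: "'k rel" and d :: "'l \<Rightarrow> 'l \<Rightarrow> 'k"
  assumes "Cinfinite K" and "regularCard K"
    and "Cinfinite L" and "regularCard L"
    and "ordLess2 K L"
    and "colouring L K d" and "subadditive L K d" and "unbounded_col L K d"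
  shows "\<exists>\<R>. strong_lambda_system L (Field L) (ord_one L) \<R> \<and> ordIso2 (card_of \<R>) K
              \<and> \<not> has_cofinal_branch L \<R>"
proof (intro exI conjI)
  show card: "ordIso2 (card_of (colour_bounded_rels L K d)) K"
    using card_of_colour_bounded_rels assms(3,1,2,6,8) .
  show "strong_lambda_system L (Field L) (ord_one L) (colour_bounded_rels L K d)"
    using strong_lambda_system_colour_bounded_rels assms(3,1,6,7)
      ordIso_ordLess_trans[OF card assms(5)] .
  show "\<not> has_cofinal_branch L (colour_bounded_rels L K d)"
    using not_has_cofinal_branch_colour_bounded_rels assms(1,6,8)
      wo_rel.ANTISYM[OF Cinfinite_wo_rel[OF assms(3)]] .
qed

end
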